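(* Let $R$ be a ring with identity and $a,b,c,\alpha\in R$ such that $a$ has a $(b,c)$-inverse $a^\otimes$. The following are equivalent: (i) $\alpha$ is left $(b,c)$-invertible; (ii) $\alpha$ is right annihilator $(b,c)$-invertible; (iii) $1+(\alpha-a)a^\otimes$ is left invertible; (iv) $1+a^\otimes(\alpha-a)$ is left invertible.
   Context: For $x\in R$: $xR=\{xr:r\in R\}$, $Rx=\{rx:r\in R\}$, $x^\circ=\{r: xr=0\}$. $a$ is $(b,c)$-invertible if there is $y\in R$ with $y\in (bRy)\cap(yRc)$, $yab=b$, $cay=c$; such $y$ is unique, denoted $a^\otimes$. $\alpha$ is left $(b,c)$-invertible if there is $y$ with $Ry\subseteq Rc$ and $y\alpha b=b$; right annihilator $(b,c)$-invertible if there is $y$ with $c^\circ\subseteq y^\circ$ and $y\alpha b=b$. *)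

theory Defs
  imports Main
begin

definition lmul_set :: "'a::ring_1 \<Rightarrow> 'a \<Rightarrow> 'a set" where
  "lmul_set x z = {x * r * z | r. True}"

definition left_ideal :: "'a::ring_1 \<Rightarrow> 'a set" where
  "left_ideal x = {r * x | r. True}"

definition rann :: "'a::ring_1 \<Rightarrow> 'a set" where
  "rann x = {r. x * r = 0}"

definition is_bc_inverse :: "'a::ring_1 \<Rightarrow> 'a \<Rightarrow> 'a \<Rightarrow> 'a \<Rightarrow> bool" where
  "is_bc_inverse a b c y \<longleftrightarrow>
     y \<in> lmul_set b y \<and> y \<in> lmul_set y c \<and> y * a * b = b \<and> c * a * y = c"

definition bc_invertible :: "'a::ring_1 \<Rightarrow> 'a \<Rightarrow> 'a \<Rightarrow> bool" where
  "bc_invertible a b c \<longleftrightarrow> (\<exists>y. is_bc_inverse a b c y)"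

definition bc_inverse :: "'a::ring_1 \<Rightarrow> 'a \<Rightarrow> 'a \<Rightarrow> 'a" where
  "bc_inverse a b c = (THE y. is_bc_inverse a b c y)"

definition left_bc_invertible :: "'a::ring_1 \<Rightarrow> 'a \<Rightarrow> 'a \<Rightarrow> bool" where
  "left_bc_invertible \<alpha> b c \<longleftrightarrow>
     (\<exists>y. left_ideal y \<subseteq> left_ideal c \<and> y * \<alpha> * b = b)"

definition rann_bc_invertible :: "'a::ring_1 \<Rightarrow> 'a \<Rightarrow> 'a \<Rightarrow> bool" where
  "rann_bc_invertible \<alpha> b c \<longleftrightarrow>
     (\<exists>y. rann c \<subseteq> rann y \<and> y * \<alpha> * b = b)"

definition left_invertible :: "'a::ring_1 \<Rightarrow> bool" where
  "left_invertible x \<longleftrightarrow> (\<exists>z. z * x = 1)"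

end

theory Submission
  imports Defs
begin

text \<open>Write \<open>y\<close> for the \<open>(b,c)\<close>-inverse of \<open>a\<close>. Every element \<open>z\<close> with \<open>c\<^sup>\<circ> \<subseteq> z\<^sup>\<circ>\<close>
  satisfies \<open>z = z a y\<close>, because \<open>c (1 - a y) = 0\<close>; hence \<open>z \<in> R c\<close>, which gives (i) \<open>\<Leftrightarrow>\<close> (ii).
  If moreover \<open>z \<alpha> b = b\<close>, then \<open>z \<alpha> y = y\<close> as \<open>y \<in> b R y\<close>, so \<open>z (1 + (\<alpha> - a) y) = y\<close>, and
  the idempotent \<open>a y\<close> lets one complete \<open>z\<close> to a left inverse of \<open>1 + (\<alpha> - a) y\<close>.
  Conversely, a left inverse \<open>v\<close> of \<open>1 + y (\<alpha> - a)\<close> turns \<open>(1 + y (\<alpha> - a)) b = y \<alpha> b\<close> into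
  \<open>v y \<alpha> b = b\<close>, and \<open>v y \<in> R c\<close>. Finally (iii) \<open>\<Leftrightarrow>\<close> (iv) is Jacobson's lemma.\<close>

lemma left_invertible_one_plus_mult_commute:
  fixes x y :: "'a::ring_1"
  assumes "left_invertible (1 + x * y)"
  shows "left_invertible (1 + y * x)"
proof -
  from assms obtain u where u: "u * (1 + x * y) = 1"
    unfolding left_invertible_def by blast
  have "(1 - y * u * x) * (1 + y * x) = 1 + y * x - y * (u * (1 + x * y)) * x"
    by (simp add: algebra_simps)
  also have "\<dots> = 1" using u by simp
  finally show ?thesis unfolding left_invertible_def by blast
qed

lemma left_ideal_subset_iff:
  fixes y c :: "'a::ring_1"
  shows "left_ideal y \<subseteq> left_ideal c \<longleftrightarrow> (\<exists>w. y = w * c)"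
proof
  assume "left_ideal y \<subseteq> left_ideal c"
  moreover have "y \<in> left_ideal y"
    unfolding left_ideal_def by (metis (mono_tags) mem_Collect_eq mult_1_left)
  ultimately show "\<exists>w. y = w * c" unfolding left_ideal_def by blast
next
  assume "\<exists>w. y = w * c"
  then obtain w where "y = w * c" by blast
  then have "r * y = (r * w) * c" for r by (simp add: mult.assoc)
  then show "left_ideal y \<subseteq> left_ideal c" unfolding left_ideal_def by blast
qed

lemma rann_subset_if_left_ideal_subset:
  fixes y c :: "'a::ring_1"
  assumes "left_ideal y \<subseteq> left_ideal c"
  shows "rann c \<subseteq> rann y"
  using assms unfolding left_ideal_subset_iff rann_def by (auto simp: mult.assoc)

lemma is_bc_inverse_unique:
  fixes a b c :: "'a::ring_1"
  assumes "is_bc_inverse a b c y1" "is_bc_inverse a b c y2"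
  shows "y1 = y2"
proof -
  from assms(1) obtain t where t: "y1 = y1 * t * c" and a1: "y1 * a * b = b"
    unfolding is_bc_inverse_def lmul_set_def by blast
  from assms(2) obtain s where s: "y2 = b * s * y2" and c2: "c * a * y2 = c"
    unfolding is_bc_inverse_def lmul_set_def by blast
  have "y1 * a * y2 = y1 * t * (c * a * y2)" by (subst t) (simp add: mult.assoc)
  then have "y1 * a * y2 = y1" using c2 t by simp
  moreover have "y1 * a * y2 = (y1 * a * b) * s * y2" by (subst s) (simp add: mult.assoc)
  then have "y1 * a * y2 = y2" using a1 s by metis
  ultimately show ?thesis by simp
qed

lemma bc_inverse_is_bc_inverse:
  fixes a b c :: "'a::ring_1"
  assumes "bc_invertible a b c"
  shows "is_bc_inverse a b c (bc_inverse a b c)"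
proof -
  from assms obtain y where y: "is_bc_inverse a b c y" unfolding bc_invertible_def by blast
  show ?thesis
    unfolding bc_inverse_def by (rule theI[of _ y]) (use y is_bc_inverse_unique in blast)+
qed

lemma is_bc_inverse_left_ideal_subset:
  fixes a b c x y :: "'a::ring_1"
  assumes "is_bc_inverse a b c y"
  shows "left_ideal (x * y) \<subseteq> left_ideal c"
proof -
  from assms obtain t where "y = y * t * c"
    unfolding is_bc_inverse_def lmul_set_def by blast
  then have "x * y = (x * y * t) * c" by (metis mult.assoc)
  then show ?thesis unfolding left_ideal_subset_iff by blast
qed

lemma is_bc_inverse_idempotent:
  fixes a b c y :: "'a::ring_1"
  assumes "is_bc_inverse a b c y"
  shows "y * a * y = y"
proof -
  from assms obtain t where t: "y = y * t * c" and ca: "c * a * y = c"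
    unfolding is_bc_inverse_def lmul_set_def by blast
  have "y * a * y = y * t * (c * a * y)" by (subst (1) t) (simp add: mult.assoc)
  then show ?thesis using ca t by simp
qed

lemma is_bc_inverse_absorbs_if_rann_subset:
  fixes a b c y z :: "'a::ring_1"
  assumes "is_bc_inverse a b c y" and "rann c \<subseteq> rann z"
  shows "z * a * y = z"
proof -
  from assms(1) have "c * a * y = c" unfolding is_bc_inverse_def by blast
  then have "c * (1 - a * y) = 0" by (simp add: algebra_simps mult.assoc)
  then have "z * (1 - a * y) = 0" using assms(2) unfolding rann_def by blast
  then show ?thesis by (simp add: algebra_simps mult.assoc)
qed

lemma is_bc_inverse_absorbs_if_left_inverse_on:
  fixes a b c y z \<alpha> :: "'a::ring_1"
  assumes "is_bc_inverse a b c y" and "z * \<alpha> * b = b"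
  shows "z * \<alpha> * y = y"
proof -
  from assms(1) obtain s where s: "y = b * s * y"
    unfolding is_bc_inverse_def lmul_set_def by blast
  have "z * \<alpha> * y = (z * \<alpha> * b) * s * y" by (subst (1) s) (simp add: mult.assoc)
  then show ?thesis using assms(2) s by simp
qed

lemma left_bc_invertible_iff_rann_bc_invertible:
  fixes a b c \<alpha> :: "'a::ring_1"
  assumes "is_bc_inverse a b c y"
  shows "left_bc_invertible \<alpha> b c \<longleftrightarrow> rann_bc_invertible \<alpha> b c"
proof
  assume "left_bc_invertible \<alpha> b c"
  then show "rann_bc_invertible \<alpha> b c"
    unfolding left_bc_invertible_def rann_bc_invertible_def
    using rann_subset_if_left_ideal_subset by blast
next
  assume "rann_bc_invertible \<alpha> b c"
  then obtain z where z: "rann c \<subseteq> rann z" "z * \<alpha> * b = b"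
    unfolding rann_bc_invertible_def by blast
  have "left_ideal z \<subseteq> left_ideal c"
    using is_bc_inverse_left_ideal_subset[OF assms, of "z * a"]
      is_bc_inverse_absorbs_if_rann_subset[OF assms z(1)] by simp
  with z(2) show "left_bc_invertible \<alpha> b c" unfolding left_bc_invertible_def by blast
qed

lemma rann_bc_invertible_imp_left_invertible:
  fixes a b c \<alpha> :: "'a::ring_1"
  assumes y: "is_bc_inverse a b c y" and "rann_bc_invertible \<alpha> b c"
  shows "left_invertible (1 + (\<alpha> - a) * y)"
proof -
  from assms(2) obtain z where z: "rann c \<subseteq> rann z" "z * \<alpha> * b = b"
    unfolding rann_bc_invertible_def by blast
  have z_inv_on_y: "z * (1 + (\<alpha> - a) * y) = y"
    using is_bc_inverse_absorbs_if_rann_subset[OF y z(1)]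
      is_bc_inverse_absorbs_if_left_inverse_on[OF y z(2)]
    by (simp add: algebra_simps mult.assoc)
  have idem: "a * y * a * y = a * y"
    using is_bc_inverse_idempotent[OF y] by (metis mult.assoc)
  define u where "u = (1 - a * y) + a * z - (1 - a * y) * \<alpha> * z"
  have "u * (1 + (\<alpha> - a) * y) = (1 - a * y) * (1 + (\<alpha> - a) * y)
      + a * (z * (1 + (\<alpha> - a) * y)) - (1 - a * y) * \<alpha> * (z * (1 + (\<alpha> - a) * y))"
    unfolding u_def by (simp add: algebra_simps)
  also have "\<dots> = (1 - a * y) * (1 + (\<alpha> - a) * y) + a * y - (1 - a * y) * \<alpha> * y"
    using z_inv_on_y by simp
  also have "\<dots> = 1" using idem by (simp add: algebra_simps)
  finally show ?thesis unfolding left_invertible_def by blast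
qed

lemma left_invertible_imp_left_bc_invertible:
  fixes a b c \<alpha> :: "'a::ring_1"
  assumes y: "is_bc_inverse a b c y" and "left_invertible (1 + y * (\<alpha> - a))"
  shows "left_bc_invertible \<alpha> b c"
proof -
  from assms(2) obtain v where v: "v * (1 + y * (\<alpha> - a)) = 1"
    unfolding left_invertible_def by blast
  from y have "y * a * b = b" unfolding is_bc_inverse_def by blast
  then have "(1 + y * (\<alpha> - a)) * b = y * \<alpha> * b" by (simp add: algebra_simps)
  then have "v * y * \<alpha> * b = b" using v by (metis mult.assoc mult_1_left)
  with is_bc_inverse_left_ideal_subset[OF y, of v] show ?thesis
    unfolding left_bc_invertible_def by blast
qed

theorem theorem4p2:
  fixes a b c \<alpha> :: "'a::ring_1"
  assumes "bc_invertible a b c"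
  shows "(left_bc_invertible \<alpha> b c \<longleftrightarrow> rann_bc_invertible \<alpha> b c)
    \<and> (rann_bc_invertible \<alpha> b c \<longleftrightarrow> left_invertible (1 + (\<alpha> - a) * bc_inverse a b c))
    \<and> (left_invertible (1 + (\<alpha> - a) * bc_inverse a b c)
         \<longleftrightarrow> left_invertible (1 + bc_inverse a b c * (\<alpha> - a)))"
proof -
  define y where "y = bc_inverse a b c"
  have y: "is_bc_inverse a b c y"
    unfolding y_def using assms by (rule bc_inverse_is_bc_inverse)
  have i_ii: "left_bc_invertible \<alpha> b c \<longleftrightarrow> rann_bc_invertible \<alpha> b c"
    using y by (rule left_bc_invertible_iff_rann_bc_invertible)
  have iii_iv: "left_invertible (1 + (\<alpha> - a) * y) \<longleftrightarrow> left_invertible (1 + y * (\<alpha> - a))"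
    using left_invertible_one_plus_mult_commute by blast
  have "rann_bc_invertible \<alpha> b c \<Longrightarrow> left_invertible (1 + (\<alpha> - a) * y)"
    using y by (rule rann_bc_invertible_imp_left_invertible)
  moreover have "left_invertible (1 + y * (\<alpha> - a)) \<Longrightarrow> left_bc_invertible \<alpha> b c"
    using y by (rule left_invertible_imp_left_bc_invertible)
  ultimately show ?thesis unfolding y_def[symmetric] using i_ii iii_iv by blast
qed

end
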